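(* For every integer $i\ge0$ and generic $q,a,b,\kappa\in\mathbb C$, $$\sum_{j=0}^{i}\varphi_{q,a,b,\kappa}(j\mid i)=1.$$
   Context: $(a;q)_k=\prod_{m=0}^{k-1}(1-q^ma)$ for $k\ge0$. For $q,a,b,\kappa\in\mathbb C$ and integers $i,j\ge0$, $$\varphi_{q,a,b,\kappa}(j\mid i)=a^j\frac{\mathbf 1_{j\le i}(q;q)_i}{(q;q)_j(q;q)_{i-j}}\frac{(b/a;q)_j(a;q)_{i-j}}{(b;q)_i}\frac{(q^ib\kappa;q)_{i-j}(q^{i-j+1}\kappa;q)_j}{(q^{i-j}a\kappa;q)_{i-j}(q^{2i-2j+1}a\kappa;q)_j}.$$ *)

theory Defs
  imports Complex_Main
begin

definition qpoch :: "complex \<Rightarrow> complex \<Rightarrow> nat \<Rightarrow> complex" where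
  "qpoch a q k = (\<Prod>m<k. 1 - q ^ m * a)"

definition phi :: "complex \<Rightarrow> complex \<Rightarrow> complex \<Rightarrow> complex \<Rightarrow> nat \<Rightarrow> nat \<Rightarrow> complex" where
  "phi q a b \<kappa> j i =
     (if j \<le> i then
        a ^ j * (qpoch q q i / (qpoch q q j * qpoch q q (i - j)))
          * (qpoch (b / a) q j * qpoch a q (i - j) / qpoch b q i)
          * (qpoch (q ^ i * b * \<kappa>) q (i - j) * qpoch (q ^ (i - j + 1) * \<kappa>) q j
             / (qpoch (q ^ (i - j) * a * \<kappa>) q (i - j) * qpoch (q ^ (2 * i - 2 * j + 1) * a * \<kappa>) q j))
      else 0)"

text \<open>Genericity: every denominator occurring in phi(j|i), j = 0..i, is nonzero
  (including a \<noteq> 0, needed for b/a).\<close>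
definition generic_params :: "complex \<Rightarrow> complex \<Rightarrow> complex \<Rightarrow> complex \<Rightarrow> nat \<Rightarrow> bool" where
  "generic_params q a b \<kappa> i \<longleftrightarrow>
     a \<noteq> 0 \<and> qpoch b q i \<noteq> 0 \<and>
     (\<forall>j\<le>i. qpoch q q j \<noteq> 0 \<and> qpoch q q (i - j) \<noteq> 0 \<and>
             qpoch (q ^ (i - j) * a * \<kappa>) q (i - j) \<noteq> 0 \<and>
             qpoch (q ^ (2 * i - 2 * j + 1) * a * \<kappa>) q j \<noteq> 0)"

end

theory Submission
  imports Defs
begin

text \<open>
  The proof is by the WZ method. Put \<open>F(n, j) = phi(j | n)\<close>. There is a certificate \<open>R(n, j)\<close>,
  vanishing for \<open>j = 0\<close> and \<open>j > n + 1\<close>, with \<open>F(n + 1, j) - F(n, j) = R(n, j) - R(n, j + 1)\<close>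
  for all \<open>j \<le> n + 1\<close>. Summing over \<open>j\<close> telescopes, so every row sum equals \<open>F(0, 0) = 1\<close>.
  For \<open>1 \<le> j \<le> n\<close>, \<open>R(n, j)\<close> is \<open>F(n, j - 1)\<close> times a rational function of \<open>q^j\<close> and \<open>q^n\<close>;
  at \<open>j = n + 1\<close> it is \<open>F(n + 1, n + 1)\<close>. Once the q-Pochhammer factors shared by the four terms
  of a WZ equation are divided out, the equation becomes a polynomial identity in \<open>q, a, b, \<kappa>\<close>,
  \<open>q^j\<close> and \<open>q^(n - j)\<close>; only the columns \<open>j = 0\<close> and \<open>j = n\<close> need separate treatment.
\<close>

lemma qpoch_0 [simp]: "qpoch x q 0 = 1"
  by (simp add: qpoch_def)

lemma qpoch_Suc: "qpoch x q (Suc k) = qpoch x q k * (1 - q ^ k * x)"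
  by (simp add: qpoch_def)

lemma qpoch_Suc_left: "qpoch x q (Suc k) = (1 - x) * qpoch (q * x) q k"
  unfolding qpoch_def by (subst prod.lessThan_Suc_shift) (simp add: mult_ac)

lemma qpoch_add: "qpoch x q (m + k) = qpoch x q m * qpoch (q ^ m * x) q k"
  by (induction k) (simp_all add: qpoch_Suc power_add mult_ac)

lemma qpoch_eq_0_iff: "qpoch x q k = 0 \<longleftrightarrow> (\<exists>m<k. q ^ m * x = 1)"
  by (auto simp: qpoch_def prod_zero_iff)

text \<open>Wrapping linear factors in \<open>one_minus\<close> makes \<open>field_simps\<close> treat them as atoms
  instead of multiplying them out.\<close>

definition one_minus :: "complex \<Rightarrow> complex" where
  "one_minus x = 1 - x"

lemma one_minus_eq_0_iff: "one_minus x = 0 \<longleftrightarrow> x = 1"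
  by (simp add: one_minus_def)

lemma qpoch_Suc_0: "qpoch x q (Suc 0) = one_minus x"
  by (simp add: qpoch_def one_minus_def)

lemma one_minus_divide: "a \<noteq> 0 \<Longrightarrow> one_minus (b / a) = (a - b) / a"
  by (simp add: one_minus_def field_simps)

text \<open>The nonvanishing conditions actually used for rows up to \<open>n\<close>; unlike \<open>generic_params\<close>
  they pass from \<open>n + 1\<close> to \<open>n\<close>.\<close>

definition nondegenerate :: "complex \<Rightarrow> complex \<Rightarrow> complex \<Rightarrow> complex \<Rightarrow> nat \<Rightarrow> bool" where
  "nondegenerate q a b \<kappa> n \<longleftrightarrow>
     a \<noteq> 0 \<and> (\<forall>m<n. q ^ m * b \<noteq> 1) \<and> (\<forall>m\<in>{1..n}. q ^ m \<noteq> 1) \<and> (\<forall>m\<in>{1..<2*n}. q ^ m * a * \<kappa> \<noteq> 1)"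

lemma nondegenerate_Suc: "nondegenerate q a b \<kappa> (Suc n) \<Longrightarrow> nondegenerate q a b \<kappa> n"
  unfolding nondegenerate_def by auto

lemma
  assumes "nondegenerate q a b \<kappa> n"
  shows nondegenerate_a: "a \<noteq> 0"
    and nondegenerate_b: "m < n \<Longrightarrow> q ^ m * b \<noteq> 1"
    and nondegenerate_q: "1 \<le> m \<Longrightarrow> m \<le> n \<Longrightarrow> q ^ m \<noteq> 1"
    and nondegenerate_a\<kappa>: "1 \<le> m \<Longrightarrow> m < 2 * n \<Longrightarrow> q ^ m * a * \<kappa> \<noteq> 1"
  using assms by (auto simp: nondegenerate_def)

lemma
  assumes "nondegenerate q a b \<kappa> n"
  shows nondegenerate_qpoch_q: "t \<le> n \<Longrightarrow> qpoch q q t \<noteq> 0"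
    and nondegenerate_qpoch_b: "t \<le> n \<Longrightarrow> qpoch b q t \<noteq> 0"
    and nondegenerate_qpoch_a\<kappa>: "1 \<le> s \<Longrightarrow> s + t \<le> 2 * n \<Longrightarrow> qpoch (q ^ s * a * \<kappa>) q t \<noteq> 0"
  using nondegenerate_q[OF assms, of "Suc _"] nondegenerate_b[OF assms] nondegenerate_a\<kappa>[OF assms, of "_ + s"]
  by (auto simp: qpoch_eq_0_iff mult.commute power_add mult.left_commute)

lemma generic_params_nondegenerate:
  assumes "generic_params q a b \<kappa> i"
  shows "nondegenerate q a b \<kappa> i"
proof -
  have a: "a \<noteq> 0" and b: "qpoch b q i \<noteq> 0" and q: "qpoch q q i \<noteq> 0"
    using assms unfolding generic_params_def by auto
  have a\<kappa>: "qpoch (q ^ s * a * \<kappa>) q s \<noteq> 0" if "s \<le> i" for s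
    using assms that unfolding generic_params_def by (metis diff_diff_cancel diff_le_self)
  have "q ^ m * a * \<kappa> \<noteq> 1" if m: "1 \<le> m" "m < 2 * i" for m
  proof -
    \<comment> \<open>\<open>1 - q^m a \<kappa>\<close> is a factor of \<open>(q^s a \<kappa>; q)_s\<close> for \<open>s = m div 2 + 1\<close>\<close>
    define s where "s = Suc (m div 2)"
    have s: "s \<le> i" "m - s < s" "m - s + s = m"
      using m by (auto simp: s_def)
    have "q ^ (m - s) * (q ^ s * a * \<kappa>) \<noteq> 1"
      using a\<kappa>[OF s(1)] s(2) by (auto simp: qpoch_eq_0_iff)
    then show ?thesis
      by (metis s(3) power_add mult.assoc)
  qed
  moreover have "q ^ m \<noteq> 1" if "1 \<le> m" "m \<le> i" for m
  proof -
    have "q ^ (m - 1) * q \<noteq> 1"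
      using q that by (auto simp: qpoch_eq_0_iff)
    then show ?thesis
      using that by (cases m) (auto simp: mult.commute)
  qed
  ultimately show ?thesis
    using a b by (auto simp: nondegenerate_def qpoch_eq_0_iff)
qed

definition wz_poly :: "complex \<Rightarrow> complex \<Rightarrow> complex \<Rightarrow> complex \<Rightarrow> complex \<Rightarrow> complex \<Rightarrow> complex" where
  "wz_poly q a b \<kappa> s t = 1 - (q * t - 1) * \<kappa> - t * b * \<kappa> + (1 + a) * \<kappa> * s * (q * t^2 * b * \<kappa> - 1)
     + a * \<kappa>^2 * s^2 * t * (q - (q * t - 1) * b - q * t * b * \<kappa>)"

definition wz_term :: "complex \<Rightarrow> complex \<Rightarrow> complex \<Rightarrow> complex \<Rightarrow> nat \<Rightarrow> nat \<Rightarrow> complex" where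
  "wz_term q a b \<kappa> n j = a ^ j * (qpoch q q n / (qpoch q q (j - 1) * qpoch q q (n - j + 1)))
     * (qpoch (b / a) q j * qpoch a q (n - j + 1) / qpoch b q (n + 1))
     * (qpoch (q ^ (n + 1) * b * \<kappa>) q (n - j) * qpoch (q ^ (n - j + 2) * \<kappa>) q (j - 1)
        / qpoch (q ^ (n - j + 1) * a * \<kappa>) q (n + 2))
     * q ^ (n - j + 1) * wz_poly q a b \<kappa> (q ^ (n - j + 1)) (q ^ n)"

text \<open>At \<open>j = n + 1\<close> the certificate must absorb the new entry \<open>phi(n + 1 | n + 1)\<close>.\<close>

definition wz_cert :: "complex \<Rightarrow> complex \<Rightarrow> complex \<Rightarrow> complex \<Rightarrow> nat \<Rightarrow> nat \<Rightarrow> complex" where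
  "wz_cert q a b \<kappa> n j =
     (if j = 0 then 0 else if j \<le> n then wz_term q a b \<kappa> n j
      else if j = Suc n then phi q a b \<kappa> (Suc n) (Suc n) else 0)"

text \<open>The WZ equations with their common factor removed, for the columns \<open>j = 0\<close>, \<open>0 < j < n\<close>
  and \<open>j = n\<close>; here \<open>u = q^(n - j)\<close>, and \<open>v = q^j\<close> resp. \<open>v = q^n\<close> in the boundary cases.\<close>

lemma wz_identity_first_column:
  "one_minus (v * a) * one_minus (v^2 * b * \<kappa>) * one_minus (q * v^2 * b * \<kappa>) * one_minus (v * a * \<kappa>)
   - one_minus (v * b * \<kappa>) * one_minus (v * b) * one_minus (v^2 * a * \<kappa>) * one_minus (q * v^2 * a * \<kappa>)
   = - ((a - b) * v * wz_poly q a b \<kappa> v v)"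
  unfolding one_minus_def wz_poly_def by algebra

lemma wz_identity_interior:
  "one_minus (q * u * v) * one_minus (u * a) * one_minus (u^2 * v * b * \<kappa>) * one_minus (q * u^2 * v * b * \<kappa>)
     * one_minus (q * u * v * \<kappa>) * one_minus (u * a * \<kappa>) * one_minus (q^2 * u^2 * a * \<kappa>) * a
   - one_minus (u * v * b * \<kappa>) * one_minus (q * u * \<kappa>) * one_minus (q * u^2 * v * a * \<kappa>) * one_minus (q * u)
     * one_minus (u * v * b) * one_minus (u^2 * a * \<kappa>) * one_minus (q^2 * u^2 * v * a * \<kappa>) * a
   = one_minus v * one_minus (u * a) * one_minus (u^2 * v * b * \<kappa>) * one_minus (u * a * \<kappa>) * a
       * (q * u * wz_poly q a b \<kappa> (q * u) (u * v))
     - (a - v * b) * one_minus (q * u * \<kappa>) * one_minus (q * u) * one_minus (q^2 * u^2 * v * a * \<kappa>)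
       * (a * u * wz_poly q a b \<kappa> u (u * v))"
  unfolding one_minus_def wz_poly_def by algebra

lemma wz_identity_last_column:
  "one_minus (q * v) * one_minus a * one_minus (q * v * b * \<kappa>) * one_minus (q * v * \<kappa>) * one_minus (q^2 * a * \<kappa>)
   - one_minus (q * \<kappa>) * one_minus (q * v * a * \<kappa>) * one_minus q * one_minus (v * b) * one_minus (q^2 * v * a * \<kappa>)
   = one_minus v * one_minus a * (q * wz_poly q a b \<kappa> q v)
     - (a - v * b) * one_minus (q * \<kappa>) * one_minus (q * v * \<kappa>) * one_minus q * one_minus (q^2 * v * a * \<kappa>)"
  unfolding one_minus_def wz_poly_def by algebra

text \<open>\<open>Pa\<close>, \<open>Pb\<close> (for \<open>j = 0\<close>) and \<open>P\<kappa>\<close>, \<open>Pa'\<close> (for \<open>j = n\<close>) are the q-Pochhammer tails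
  shared by all terms of the WZ equation.\<close>

locale wz_boundary =
  fixes q a b \<kappa> :: complex and n n' :: nat
  assumes nondeg: "nondegenerate q a b \<kappa> (Suc n)" and n: "n = Suc n'"
begin

definition v :: complex where "v = q ^ n"

lemma boundary_indices: "n - Suc 0 = n'" "Suc n' = n" "Suc (Suc (2 * n)) - 2 * n = Suc (Suc 0)"
  using n by simp_all

lemma boundary_powers: "q ^ n = v" "q ^ Suc n = q * v" "q ^ Suc (Suc 0) = q^2" "q ^ Suc (Suc (Suc 0)) = q^3"
  by (simp_all add: v_def power2_eq_square power3_eq_cube)

definition Pa :: complex where "Pa = qpoch (q * v * a * \<kappa>) q n'"
definition Pb :: complex where "Pb = qpoch (q * v * b * \<kappa>) q n'"
definition P\<kappa> :: complex where "P\<kappa> = qpoch (q^2 * \<kappa>) q n'"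
definition Pa' :: complex where "Pa' = qpoch (q^3 * a * \<kappa>) q n'"

lemma boundary_nonzero:
  "qpoch q q n \<noteq> 0" "qpoch q q (Suc n) \<noteq> 0" "qpoch q q n' \<noteq> 0" "qpoch b q n \<noteq> 0" "Pa \<noteq> 0" "Pa' \<noteq> 0"
  "a \<noteq> 0" "one_minus q \<noteq> 0" "one_minus v \<noteq> 0" "one_minus (q * v) \<noteq> 0" "one_minus (v * b) \<noteq> 0"
  "one_minus (q * a * \<kappa>) \<noteq> 0" "one_minus (q^2 * a * \<kappa>) \<noteq> 0" "one_minus (v * a * \<kappa>) \<noteq> 0"
  "one_minus (q * v * a * \<kappa>) \<noteq> 0" "one_minus (q^2 * v * a * \<kappa>) \<noteq> 0"
  "one_minus (v^2 * a * \<kappa>) \<noteq> 0" "one_minus (q * v^2 * a * \<kappa>) \<noteq> 0"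
  using nondegenerate_qpoch_q[OF nondeg, of n] nondegenerate_qpoch_q[OF nondeg, of "Suc n"]
    nondegenerate_qpoch_q[OF nondeg, of n'] nondegenerate_qpoch_b[OF nondeg, of n]
    nondegenerate_qpoch_a\<kappa>[OF nondeg, of "Suc n" n'] nondegenerate_qpoch_a\<kappa>[OF nondeg, of 3 n']
    nondegenerate_a[OF nondeg] nondegenerate_q[OF nondeg, of 1] nondegenerate_q[OF nondeg, of n]
    nondegenerate_q[OF nondeg, of "Suc n"] nondegenerate_b[OF nondeg, of n]
    nondegenerate_a\<kappa>[OF nondeg, of 1] nondegenerate_a\<kappa>[OF nondeg, of 2] nondegenerate_a\<kappa>[OF nondeg, of n]
    nondegenerate_a\<kappa>[OF nondeg, of "Suc n"] nondegenerate_a\<kappa>[OF nondeg, of "Suc (Suc n)"]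
    nondegenerate_a\<kappa>[OF nondeg, of "2 * n"] nondegenerate_a\<kappa>[OF nondeg, of "2 * n + 1"]
  unfolding v_def Pa_def Pa'_def one_minus_eq_0_iff
  by (simp_all add: n power2_eq_square power3_eq_cube power_add power_mult mult_ac)

lemma boundary_factors_left:
  "qpoch (v * b * \<kappa>) q n = one_minus (v * b * \<kappa>) * Pb"
  "qpoch (v * a * \<kappa>) q n = one_minus (v * a * \<kappa>) * Pa"
  "qpoch (q * \<kappa>) q n = one_minus (q * \<kappa>) * P\<kappa>"
  "qpoch (q * a * \<kappa>) q (Suc n) = one_minus (q * a * \<kappa>) * one_minus (q^2 * a * \<kappa>) * Pa'"
  unfolding v_def Pa_def Pb_def P\<kappa>_def Pa'_def one_minus_def
  by (simp_all add: n qpoch_Suc_left power2_eq_square power3_eq_cube mult_ac)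

lemma boundary_factors_right:
  "qpoch q q n = qpoch q q n' * one_minus v"
  "qpoch q q (Suc n) = qpoch q q n * one_minus (q * v)"
  "qpoch a q (Suc n) = qpoch a q n * one_minus (v * a)"
  "qpoch b q (Suc n) = qpoch b q n * one_minus (v * b)"
  "qpoch (q * v * b * \<kappa>) q (Suc n) = Pb * one_minus (v^2 * b * \<kappa>) * one_minus (q * v^2 * b * \<kappa>)"
  "qpoch (q * v * a * \<kappa>) q (Suc n) = Pa * one_minus (v^2 * a * \<kappa>) * one_minus (q * v^2 * a * \<kappa>)"
  "qpoch (q^2 * \<kappa>) q n = P\<kappa> * one_minus (q * v * \<kappa>)"
  "qpoch (q^3 * a * \<kappa>) q n = Pa' * one_minus (q^2 * v * a * \<kappa>)"
  unfolding v_def Pa_def Pb_def P\<kappa>_def Pa'_def one_minus_def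
  by (simp_all add: n qpoch_Suc power2_eq_square power3_eq_cube power_add mult_ac)

lemma boundary_factors_compound:
  "qpoch (v * a * \<kappa>) q (Suc (Suc n)) = one_minus (v * a * \<kappa>) * Pa * one_minus (v^2 * a * \<kappa>) * one_minus (q * v^2 * a * \<kappa>)"
  "qpoch (q * \<kappa>) q (Suc n) = one_minus (q * \<kappa>) * P\<kappa> * one_minus (q * v * \<kappa>)"
  "qpoch (q * a * \<kappa>) q (Suc (Suc n)) = one_minus (q * a * \<kappa>) * one_minus (q^2 * a * \<kappa>) * Pa' * one_minus (q^2 * v * a * \<kappa>)"
  "qpoch (q * a * \<kappa>) q n = one_minus (q * a * \<kappa>) * one_minus (q^2 * a * \<kappa>) * Pa' / one_minus (q * v * a * \<kappa>)"
  "qpoch (b / a) q (Suc n) = qpoch (b / a) q n * (a - v * b) / a"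
proof -
  show "qpoch (v * a * \<kappa>) q (Suc (Suc n)) = one_minus (v * a * \<kappa>) * Pa * one_minus (v^2 * a * \<kappa>) * one_minus (q * v^2 * a * \<kappa>)"
    by (simp only: qpoch_Suc boundary_factors_left(2)) (simp add: v_def one_minus_def power2_eq_square power_add mult_ac)
  show "qpoch (q * \<kappa>) q (Suc n) = one_minus (q * \<kappa>) * P\<kappa> * one_minus (q * v * \<kappa>)"
    by (simp only: qpoch_Suc[of _ _ n] boundary_factors_left(3)) (simp add: v_def one_minus_def mult_ac)
  show "qpoch (q * a * \<kappa>) q (Suc (Suc n)) = one_minus (q * a * \<kappa>) * one_minus (q^2 * a * \<kappa>) * Pa' * one_minus (q^2 * v * a * \<kappa>)"
    by (simp only: qpoch_Suc[of _ _ "Suc n"] boundary_factors_left(4)) (simp add: v_def one_minus_def power2_eq_square mult_ac)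
  have "qpoch (q * a * \<kappa>) q n * one_minus (q * v * a * \<kappa>) = one_minus (q * a * \<kappa>) * one_minus (q^2 * a * \<kappa>) * Pa'"
    unfolding boundary_factors_left(4)[symmetric] by (simp add: qpoch_Suc v_def one_minus_def mult_ac)
  then show "qpoch (q * a * \<kappa>) q n = one_minus (q * a * \<kappa>) * one_minus (q^2 * a * \<kappa>) * Pa' / one_minus (q * v * a * \<kappa>)"
    using boundary_nonzero by (simp add: field_simps)
  show "qpoch (b / a) q (Suc n) = qpoch (b / a) q n * (a - v * b) / a"
    using boundary_nonzero by (simp add: qpoch_Suc v_def one_minus_def field_simps)
qed

lemmas boundary_factors = boundary_factors_left boundary_factors_right boundary_factors_compound qpoch_Suc_0
  one_minus_divide[OF boundary_nonzero(7)]

definition first_common :: complex where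
  "first_common = qpoch a q n / qpoch b q n * (Pb / Pa)"

definition first_denom :: complex where
  "first_denom = one_minus (v * b) * one_minus (v * a * \<kappa>) * one_minus (v^2 * a * \<kappa>) * one_minus (q * v^2 * a * \<kappa>)"

lemma first_column_step: "phi q a b \<kappa> 0 (Suc n) - phi q a b \<kappa> 0 n = - wz_term q a b \<kappa> n 1"
proof -
  have factored: "phi q a b \<kappa> 0 n = first_common / first_denom
      * (one_minus (v * b * \<kappa>) * one_minus (v * b) * one_minus (v^2 * a * \<kappa>) * one_minus (q * v^2 * a * \<kappa>))"
    "phi q a b \<kappa> 0 (Suc n) = first_common / first_denom
      * (one_minus (v * a) * one_minus (v^2 * b * \<kappa>) * one_minus (q * v^2 * b * \<kappa>) * one_minus (v * a * \<kappa>))"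
    "wz_term q a b \<kappa> n 1 = first_common / first_denom * ((a - b) * v * wz_poly q a b \<kappa> v v)"
    using boundary_nonzero
    by (simp_all add: phi_def wz_term_def boundary_indices boundary_powers boundary_factors Pb_def[symmetric] del: qpoch_Suc power_Suc)
      (simp_all add: first_common_def first_denom_def field_simps)
  show ?thesis
    unfolding factored right_diff_distrib[symmetric] wz_identity_first_column by simp
qed

definition last_common :: complex where
  "last_common = a ^ n * (qpoch (b / a) q n / qpoch b q n) * (P\<kappa> / Pa')"

definition last_denom :: complex where
  "last_denom = one_minus q * one_minus (v * b) * one_minus (q * a * \<kappa>) * one_minus (q^2 * a * \<kappa>)
    * one_minus (q^2 * v * a * \<kappa>)"

lemma last_column_step:
  "phi q a b \<kappa> n (Suc n) - phi q a b \<kappa> n n = wz_term q a b \<kappa> n n - phi q a b \<kappa> (Suc n) (Suc n)"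
proof -
  have factored: "phi q a b \<kappa> n n = last_common / last_denom * (one_minus (q * \<kappa>) * one_minus (q * v * a * \<kappa>) * one_minus q
      * one_minus (v * b) * one_minus (q^2 * v * a * \<kappa>))"
    "phi q a b \<kappa> n (Suc n) = last_common / last_denom * (one_minus (q * v) * one_minus a * one_minus (q * v * b * \<kappa>)
      * one_minus (q * v * \<kappa>) * one_minus (q^2 * a * \<kappa>))"
    "wz_term q a b \<kappa> n n = last_common / last_denom * (one_minus v * one_minus a * (q * wz_poly q a b \<kappa> q v))"
    "phi q a b \<kappa> (Suc n) (Suc n) = last_common / last_denom * ((a - v * b) * one_minus (q * \<kappa>) * one_minus (q * v * \<kappa>)
      * one_minus q * one_minus (q^2 * v * a * \<kappa>))"
    using boundary_nonzero
    by (simp_all add: phi_def wz_term_def boundary_indices boundary_powers boundary_factors P\<kappa>_def[symmetric] del: qpoch_Suc power_Suc)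
      (simp_all add: last_common_def last_denom_def field_simps)
  show ?thesis
    unfolding factored right_diff_distrib[symmetric] wz_identity_last_column by simp
qed

end

locale wz_interior =
  fixes q a b \<kappa> :: complex and n j k j' k' :: nat
  assumes nondeg: "nondegenerate q a b \<kappa> (Suc n)"
    and j: "j = Suc j'" and k: "k = Suc k'" and n: "n = j + k"
begin

definition u :: complex where "u = q ^ k"
definition v :: complex where "v = q ^ j"

lemma interior_indices:
  "j \<le> n" "j \<le> Suc n" "n - j = k" "Suc n - j = Suc k" "2 * n - 2 * j = 2 * k"
  "Suc (Suc (2 * n)) - 2 * j = Suc (Suc (2 * k))" "j - Suc 0 = j'" "n - Suc j = k'" "Suc j' = j" "Suc k' = k"
  using j k n by simp_all

lemma interior_powers:
  "q ^ k = u" "q ^ j = v" "q ^ n = u * v" "q ^ Suc k = q * u" "q ^ Suc n = q * u * v"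
  "q ^ Suc (Suc k) = q^2 * u" "q ^ Suc (2 * k) = q * u^2" "q ^ Suc (Suc (Suc (2 * k))) = q^3 * u^2"
  by (simp_all add: u_def v_def n power_add power_mult power2_eq_square power3_eq_cube mult_ac)

definition Pa :: complex where "Pa = qpoch (q * u * a * \<kappa>) q k'"
definition Pb :: complex where "Pb = qpoch (q * u * v * b * \<kappa>) q k'"
definition P\<kappa> :: complex where "P\<kappa> = qpoch (q^2 * u * \<kappa>) q j'"
definition Pa' :: complex where "Pa' = qpoch (q^3 * u^2 * a * \<kappa>) q j'"

lemma interior_nonzero:
  "qpoch q q j' \<noteq> 0" "qpoch q q k \<noteq> 0" "qpoch b q n \<noteq> 0" "Pa \<noteq> 0" "Pa' \<noteq> 0" "a \<noteq> 0"
  "one_minus v \<noteq> 0" "one_minus (q * u) \<noteq> 0" "one_minus (u * v * b) \<noteq> 0" "one_minus (u * a * \<kappa>) \<noteq> 0"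
  "one_minus (u^2 * a * \<kappa>) \<noteq> 0" "one_minus (q * u^2 * a * \<kappa>) \<noteq> 0" "one_minus (q^2 * u^2 * a * \<kappa>) \<noteq> 0"
  "one_minus (q^2 * u^2 * v * a * \<kappa>) \<noteq> 0" "one_minus (q * u^2 * v * a * \<kappa>) \<noteq> 0"
  using nondegenerate_qpoch_q[OF nondeg, of j'] nondegenerate_qpoch_q[OF nondeg, of k]
    nondegenerate_qpoch_b[OF nondeg, of n] nondegenerate_qpoch_a\<kappa>[OF nondeg, of "Suc k" k']
    nondegenerate_qpoch_a\<kappa>[OF nondeg, of "2 * k + 3" j'] nondegenerate_a[OF nondeg]
    nondegenerate_q[OF nondeg, of j] nondegenerate_q[OF nondeg, of "Suc k"] nondegenerate_b[OF nondeg, of n]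
    nondegenerate_a\<kappa>[OF nondeg, of k] nondegenerate_a\<kappa>[OF nondeg, of "2 * k"]
    nondegenerate_a\<kappa>[OF nondeg, of "2 * k + 1"] nondegenerate_a\<kappa>[OF nondeg, of "2 * k + 2"]
    nondegenerate_a\<kappa>[OF nondeg, of "n + k + 2"] nondegenerate_a\<kappa>[OF nondeg, of "n + k + 1"]
  unfolding u_def v_def Pa_def Pa'_def one_minus_eq_0_iff
  by (simp_all add: j k n power_add power_mult power2_eq_square power3_eq_cube eval_nat_numeral mult_ac)

lemma interior_factors_left:
  "qpoch (u * v * b * \<kappa>) q k = one_minus (u * v * b * \<kappa>) * Pb"
  "qpoch (q * u * \<kappa>) q j = one_minus (q * u * \<kappa>) * P\<kappa>"
  "qpoch (u * a * \<kappa>) q k = one_minus (u * a * \<kappa>) * Pa"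
  "qpoch (u^2 * a * \<kappa>) q (Suc (Suc j))
     = one_minus (u^2 * a * \<kappa>) * one_minus (q * u^2 * a * \<kappa>) * one_minus (q^2 * u^2 * a * \<kappa>) * Pa'"
  unfolding u_def v_def Pa_def Pb_def P\<kappa>_def Pa'_def one_minus_def
  by (simp_all add: j k qpoch_Suc_left power2_eq_square power3_eq_cube mult_ac)

lemma interior_factors_right:
  "qpoch q q j = qpoch q q j' * one_minus v"
  "qpoch q q (Suc n) = qpoch q q n * one_minus (q * u * v)"
  "qpoch q q (Suc k) = qpoch q q k * one_minus (q * u)"
  "qpoch a q (Suc k) = qpoch a q k * one_minus (u * a)"
  "qpoch b q (Suc n) = qpoch b q n * one_minus (u * v * b)"
  "qpoch (q * u * v * b * \<kappa>) q (Suc k) = Pb * one_minus (u^2 * v * b * \<kappa>) * one_minus (q * u^2 * v * b * \<kappa>)"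
  "qpoch (q^2 * u * \<kappa>) q j = P\<kappa> * one_minus (q * u * v * \<kappa>)"
  "qpoch (q * u * a * \<kappa>) q (Suc k) = Pa * one_minus (u^2 * a * \<kappa>) * one_minus (q * u^2 * a * \<kappa>)"
  "qpoch (q^3 * u^2 * a * \<kappa>) q j = Pa' * one_minus (q^2 * u^2 * v * a * \<kappa>)"
  "qpoch (q * u * v * b * \<kappa>) q k = Pb * one_minus (u^2 * v * b * \<kappa>)"
  unfolding u_def v_def Pa_def Pb_def P\<kappa>_def Pa'_def one_minus_def
  by (simp_all add: j k n qpoch_Suc power2_eq_square power3_eq_cube power_add mult_ac)

lemma interior_factors_compound:
  "qpoch (q * u^2 * a * \<kappa>) q j
     = one_minus (q * u^2 * a * \<kappa>) * one_minus (q^2 * u^2 * a * \<kappa>) * Pa' / one_minus (q * u^2 * v * a * \<kappa>)"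
  "qpoch (q * u * a * \<kappa>) q (Suc (Suc n)) = Pa * one_minus (u^2 * a * \<kappa>) * one_minus (q * u^2 * a * \<kappa>)
     * one_minus (q^2 * u^2 * a * \<kappa>) * Pa' * one_minus (q^2 * u^2 * v * a * \<kappa>)"
  "qpoch (u * a * \<kappa>) q (Suc (Suc n)) = one_minus (u * a * \<kappa>) * Pa * one_minus (u^2 * a * \<kappa>)
     * one_minus (q * u^2 * a * \<kappa>) * one_minus (q^2 * u^2 * a * \<kappa>) * Pa'"
  "qpoch (b / a) q (Suc j) = qpoch (b / a) q j * (a - v * b) / a"
proof -
  have "qpoch (q * u^2 * a * \<kappa>) q j * one_minus (q * u^2 * v * a * \<kappa>) = qpoch (q * u^2 * a * \<kappa>) q (Suc j)"
    by (simp add: qpoch_Suc v_def one_minus_def mult_ac)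
  also have "\<dots> = one_minus (q * u^2 * a * \<kappa>) * one_minus (q^2 * u^2 * a * \<kappa>) * Pa'"
    unfolding Pa'_def one_minus_def by (simp add: j qpoch_Suc_left power2_eq_square power3_eq_cube mult_ac)
  finally show "qpoch (q * u^2 * a * \<kappa>) q j
      = one_minus (q * u^2 * a * \<kappa>) * one_minus (q^2 * u^2 * a * \<kappa>) * Pa' / one_minus (q * u^2 * v * a * \<kappa>)"
    using interior_nonzero by (simp add: field_simps)
  have split: "Suc n = k' + Suc (Suc j)" "q ^ k' * (q * u * a * \<kappa>) = u^2 * a * \<kappa>"
    unfolding u_def using n k by (simp_all add: power2_eq_square mult_ac)
  have "qpoch (q * u * a * \<kappa>) q (Suc (Suc n)) = Pa * qpoch (u^2 * a * \<kappa>) q (Suc (Suc (Suc j)))"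
    by (simp only: split(1) add_Suc_right[symmetric] qpoch_add split(2) Pa_def)
  then show "qpoch (q * u * a * \<kappa>) q (Suc (Suc n)) = Pa * one_minus (u^2 * a * \<kappa>) * one_minus (q * u^2 * a * \<kappa>)
      * one_minus (q^2 * u^2 * a * \<kappa>) * Pa' * one_minus (q^2 * u^2 * v * a * \<kappa>)"
    by (simp only: qpoch_Suc[of _ _ "Suc (Suc j)"] interior_factors_left(4))
      (simp add: v_def one_minus_def power2_eq_square mult_ac)
  have "qpoch (u * a * \<kappa>) q (Suc (Suc n)) = one_minus (u * a * \<kappa>) * qpoch (q * u * a * \<kappa>) q (k' + Suc (Suc j))"
    by (simp only: split(1)[symmetric] qpoch_Suc_left one_minus_def mult.assoc)
  then show "qpoch (u * a * \<kappa>) q (Suc (Suc n)) = one_minus (u * a * \<kappa>) * Pa * one_minus (u^2 * a * \<kappa>)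
      * one_minus (q * u^2 * a * \<kappa>) * one_minus (q^2 * u^2 * a * \<kappa>) * Pa'"
    by (simp only: qpoch_add split(2) Pa_def[symmetric] interior_factors_left(4)) (simp add: mult_ac)
  show "qpoch (b / a) q (Suc j) = qpoch (b / a) q j * (a - v * b) / a"
    using interior_nonzero by (simp add: qpoch_Suc v_def field_simps)
qed

lemmas interior_factors = interior_factors_left interior_factors_right interior_factors_compound

definition interior_common :: complex where
  "interior_common = a ^ j * (qpoch q q n / (qpoch q q j' * one_minus v * qpoch q q k))
    * (qpoch (b / a) q j * qpoch a q k / qpoch b q n) * (Pb * P\<kappa> / (Pa * Pa'))"

definition interior_denom :: complex where
  "interior_denom = one_minus (q * u) * one_minus (u * v * b) * one_minus (u * a * \<kappa>) * one_minus (u^2 * a * \<kappa>)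
    * one_minus (q * u^2 * a * \<kappa>) * one_minus (q^2 * u^2 * a * \<kappa>) * one_minus (q^2 * u^2 * v * a * \<kappa>) * a"

lemma interior_step:
  "phi q a b \<kappa> j (Suc n) - phi q a b \<kappa> j n = wz_term q a b \<kappa> n j - wz_term q a b \<kappa> n (Suc j)"
proof -
  have factored: "phi q a b \<kappa> j n = interior_common / interior_denom
      * (one_minus (u * v * b * \<kappa>) * one_minus (q * u * \<kappa>) * one_minus (q * u^2 * v * a * \<kappa>)
         * one_minus (q * u) * one_minus (u * v * b) * one_minus (u^2 * a * \<kappa>) * one_minus (q^2 * u^2 * v * a * \<kappa>) * a)"
    "phi q a b \<kappa> j (Suc n) = interior_common / interior_denom
      * (one_minus (q * u * v) * one_minus (u * a) * one_minus (u^2 * v * b * \<kappa>) * one_minus (q * u^2 * v * b * \<kappa>)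
         * one_minus (q * u * v * \<kappa>) * one_minus (u * a * \<kappa>) * one_minus (q^2 * u^2 * a * \<kappa>) * a)"
    "wz_term q a b \<kappa> n j = interior_common / interior_denom
      * (one_minus v * one_minus (u * a) * one_minus (u^2 * v * b * \<kappa>) * one_minus (u * a * \<kappa>) * a
         * (q * u * wz_poly q a b \<kappa> (q * u) (u * v)))"
    "wz_term q a b \<kappa> n (Suc j) = interior_common / interior_denom
      * ((a - v * b) * one_minus (q * u * \<kappa>) * one_minus (q * u) * one_minus (q^2 * u^2 * v * a * \<kappa>)
         * (a * u * wz_poly q a b \<kappa> u (u * v)))"
    using interior_nonzero
    by (simp_all add: phi_def wz_term_def interior_indices interior_powers interior_factors
        Pb_def[symmetric] P\<kappa>_def[symmetric] del: qpoch_Suc power_Suc)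
      (simp_all add: interior_common_def interior_denom_def field_simps)
  show ?thesis
    unfolding factored right_diff_distrib[symmetric] wz_identity_interior ..
qed

end

lemma wz_step_row_zero:
  assumes nd: "nondegenerate q a b \<kappa> (Suc 0)"
  shows "phi q a b \<kappa> 0 (Suc 0) - phi q a b \<kappa> 0 0 = - phi q a b \<kappa> (Suc 0) (Suc 0)"
proof -
  have "a \<noteq> 0" "one_minus q \<noteq> 0" "one_minus b \<noteq> 0" "one_minus (q * a * \<kappa>) \<noteq> 0"
    using nondegenerate_a[OF nd] nondegenerate_q[OF nd, of 1] nondegenerate_b[OF nd, of 0]
      nondegenerate_a\<kappa>[OF nd, of 1]
    by (simp_all add: one_minus_eq_0_iff)
  then show ?thesis
    by (simp add: phi_def qpoch_Suc_0 one_minus_divide field_simps) (simp add: one_minus_def algebra_simps)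
qed

lemma wz_step:
  assumes nd: "nondegenerate q a b \<kappa> (Suc n)" and j: "j \<le> Suc n"
  shows "phi q a b \<kappa> j (Suc n) - phi q a b \<kappa> j n = wz_cert q a b \<kappa> n j - wz_cert q a b \<kappa> n (Suc j)"
proof -
  consider "j = 0" "n = 0" | n' where "j = 0" "n = Suc n'"
    | j' k' where "j = Suc j'" "n = j + Suc k'" | n' where "j = n" "n = Suc n'" | "j = Suc n"
  proof (cases "j = 0")
    case True
    then show ?thesis using that(1,2) by (cases n) auto
  next
    case False
    then obtain j' where j': "j = Suc j'" using not0_implies_Suc by blast
    consider "j < n" | "j = n" | "j = Suc n" using j by linarith
    then show ?thesis
      using that(3-5) j' less_imp_Suc_add[of j n] by cases (auto simp: add.commute)
  qed
  then show ?thesis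
  proof cases
    case 1
    then show ?thesis using wz_step_row_zero nd by (simp add: wz_cert_def)
  next
    case (2 n')
    then interpret wz_boundary q a b \<kappa> n n'
      using nd by unfold_locales
    show ?thesis
      using first_column_step 2 by (simp add: wz_cert_def)
  next
    case (3 j' k')
    then interpret wz_interior q a b \<kappa> n j "Suc k'" j' k'
      using nd by unfold_locales simp_all
    show ?thesis
      using interior_step 3 by (simp add: wz_cert_def)
  next
    case (4 n')
    then interpret wz_boundary q a b \<kappa> n n'
      using nd by unfold_locales
    show ?thesis
      using last_column_step 4 by (simp add: wz_cert_def)
  next
    case 5
    then show ?thesis by (simp add: wz_cert_def phi_def)
  qed
qed

lemma sum_phi_eq_1: "nondegenerate q a b \<kappa> n \<Longrightarrow> (\<Sum>j\<le>n. phi q a b \<kappa> j n) = 1"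
proof (induction n)
  case 0
  then show ?case by (simp add: phi_def)
next
  case (Suc n)
  have "(\<Sum>j\<le>Suc n. phi q a b \<kappa> j (Suc n))
      = (\<Sum>j\<le>Suc n. phi q a b \<kappa> j n + (wz_cert q a b \<kappa> n j - wz_cert q a b \<kappa> n (Suc j)))"
    by (rule sum.cong) (auto simp: wz_step[OF Suc.prems, symmetric])
  also have "\<dots> = (\<Sum>j\<le>Suc n. phi q a b \<kappa> j n) + (\<Sum>j<Suc (Suc n). wz_cert q a b \<kappa> n j - wz_cert q a b \<kappa> n (Suc j))"
    by (simp add: sum.distrib lessThan_Suc_atMost)
  also have "(\<Sum>j<Suc (Suc n). wz_cert q a b \<kappa> n j - wz_cert q a b \<kappa> n (Suc j)) = 0"
    by (simp only: sum_lessThan_telescope') (simp add: wz_cert_def)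
  also have "(\<Sum>j\<le>Suc n. phi q a b \<kappa> j n) = (\<Sum>j\<le>n. phi q a b \<kappa> j n)"
    by (simp add: phi_def)
  finally show ?case
    using Suc.IH nondegenerate_Suc[OF Suc.prems] by simp
qed

theorem mainTheorem6:
  fixes q a b \<kappa> :: complex and i :: nat
  assumes "generic_params q a b \<kappa> i"
  shows "(\<Sum>j\<le>i. phi q a b \<kappa> j i) = 1"
  by (rule sum_phi_eq_1[OF generic_params_nondegenerate[OF assms]])
end
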